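(* Weak-SW-JR does not imply IW-JR, IW-JR does not imply weak-SW-JR, and the two are not mutually exclusive: there exist an approval-based SCV instance and committees $W^1,W^2,W^3$ for it such that $W^1$ satisfies weak-SW-JR but not IW-JR, $W^2$ satisfies IW-JR but not weak-SW-JR, and $W^3$ satisfies both weak-SW-JR and IW-JR.
   Context: An approval-based sub-committee voting (SCV) instance consists of a set of voters $N=\{1,\ldots,n\}$, a finite set of candidates $C$ partitioned into candidate subsets $C_1,\ldots,C_\ell$, positive integer quotas $k_j\le |C_j|$ with $k=\sum_{j=1}^\ell k_j$, and approval ballots $A_i\subseteq C$ for $i\in N$. A committee is a set $W\subseteq C$ with $|W\cap C_j|=k_j$ for every $j$. $W$ satisfies Intra-wise JR (IW-JR) if for every $X\subseteq N$ and every $j$, whenever $|X|\ge n/k_j$ and $|(\bigcap_{i\in X}A_i)\cap C_j|\ge 1$, we have $|W\cap C_j\cap \bigcup_{i\in X}A_i|\ge 1$. $W$ satisfies weak-SW-JR if for every $X\subseteq N$ with $|X|\ge n/k$ and $|(\bigcap_{i\in X}A_i)\cap C_j|\ge 1$ for all $j=1,\ldots,\ell$ we have $|W\cap \bigcup_{i\in X}A_i|\ge 1$. *)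

theory Defs
  imports Complex_Main
begin

definition scv_instance ::
  "nat \<Rightarrow> nat set \<Rightarrow> nat set list \<Rightarrow> nat list \<Rightarrow> (nat \<Rightarrow> nat set) \<Rightarrow> bool" where
  "scv_instance n C Cs ks A \<longleftrightarrow>
     n \<ge> 1 \<and> finite C \<and> length Cs \<ge> 1 \<and> length ks = length Cs \<and>
     \<Union>(set Cs) = C \<and>
     (\<forall>j<length Cs. \<forall>j'<length Cs. j \<noteq> j' \<longrightarrow> Cs!j \<inter> Cs!j' = {}) \<and>
     (\<forall>j<length Cs. 0 < ks!j \<and> ks!j \<le> card (Cs!j)) \<and>
     (\<forall>i\<in>{1..n}. A i \<subseteq> C)"

definition is_committee :: "nat set \<Rightarrow> nat set list \<Rightarrow> nat list \<Rightarrow> nat set \<Rightarrow> bool" where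
  "is_committee C Cs ks W \<longleftrightarrow> W \<subseteq> C \<and> (\<forall>j<length Cs. card (W \<inter> Cs!j) = ks!j)"

definition IW_JR ::
  "nat \<Rightarrow> nat set list \<Rightarrow> nat list \<Rightarrow> (nat \<Rightarrow> nat set) \<Rightarrow> nat set \<Rightarrow> bool" where
  "IW_JR n Cs ks A W \<longleftrightarrow>
     (\<forall>X. X \<subseteq> {1..n} \<longrightarrow> (\<forall>j<length Cs.
        real (card X) \<ge> real n / real (ks!j) \<and> card ((\<Inter>i\<in>X. A i) \<inter> Cs!j) \<ge> 1
        \<longrightarrow> card (W \<inter> Cs!j \<inter> (\<Union>i\<in>X. A i)) \<ge> 1))"

definition weak_SW_JR ::
  "nat \<Rightarrow> nat set list \<Rightarrow> nat list \<Rightarrow> (nat \<Rightarrow> nat set) \<Rightarrow> nat set \<Rightarrow> bool" where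
  "weak_SW_JR n Cs ks A W \<longleftrightarrow>
     (\<forall>X. X \<subseteq> {1..n} \<longrightarrow>
        real (card X) \<ge> real n / real (sum_list ks) \<and>
        (\<forall>j<length Cs. card ((\<Inter>i\<in>X. A i) \<inter> Cs!j) \<ge> 1)
        \<longrightarrow> card (W \<inter> (\<Union>i\<in>X. A i)) \<ge> 1)"

end

theory Submission
  imports Defs
begin

text \<open>The only group large enough for
  IW-JR is both voters, who agree only on candidate 1 of the first subset, so IW-JR asks for
  a member of \<open>{1,2}\<close>. Every single voter is large enough for weak-SW-JR, but only voter 2
  approves a candidate in each subset, so weak-SW-JR asks for a member of \<open>{1,4}\<close>.\<close>

definition example_Cs :: "nat set list" where
  "example_Cs = [{1,2,3}, {4,5}]"

definition example_ks :: "nat list" where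
  "example_ks = [1, 1]"

definition example_ballots :: "nat \<Rightarrow> nat set" where
  "example_ballots i = (if i = 1 then {1,2} else if i = 2 then {1,4} else {})"

lemma all_subsets_atLeastAtMost_1_2:
  "(\<forall>X. X \<subseteq> {1..2::nat} \<longrightarrow> P X) \<longleftrightarrow> P {} \<and> P {1} \<and> P {2} \<and> P {1,2}"
proof -
  have "{1..2::nat} = {1,2}" by auto
  then have "X \<subseteq> {1..2} \<longleftrightarrow> X = {} \<or> X = {1} \<or> X = {2} \<or> X = {1,2}" for X :: "nat set"
    by auto
  then show ?thesis by auto
qed

lemma all_less_2: "(\<forall>j < Suc (Suc 0). P j) \<longleftrightarrow> P 0 \<and> P 1"
  by (auto simp: less_Suc_eq)

lemma scv_instance_example:
  "scv_instance 2 {1,2,3,4,5} example_Cs example_ks example_ballots"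
  unfolding scv_instance_def example_Cs_def example_ks_def example_ballots_def
  by (auto simp: less_Suc_eq)

lemma is_committee_example_iff:
  "is_committee {1,2,3,4,5} example_Cs example_ks W \<longleftrightarrow>
     W \<subseteq> {1,2,3,4,5} \<and> card (W \<inter> {1,2,3}) = 1 \<and> card (W \<inter> {4,5}) = 1"
  unfolding is_committee_def example_Cs_def example_ks_def by (simp add: all_less_2)

lemma IW_JR_example_iff:
  "IW_JR 2 example_Cs example_ks example_ballots W \<longleftrightarrow> W \<inter> {1,2} \<noteq> {}"
  unfolding IW_JR_def all_subsets_atLeastAtMost_1_2 example_Cs_def example_ks_def
  by (auto simp: all_less_2 example_ballots_def Suc_le_eq card_gt_0_iff)

lemma weak_SW_JR_example_iff:
  "weak_SW_JR 2 example_Cs example_ks example_ballots W \<longleftrightarrow> W \<inter> {1,4} \<noteq> {}"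
  unfolding weak_SW_JR_def all_subsets_atLeastAtMost_1_2 example_Cs_def example_ks_def
  by (auto simp: all_less_2 example_ballots_def Suc_le_eq card_gt_0_iff)

theorem mainTheorem4:
  shows "\<exists>n C Cs ks A W1 W2 W3.
    scv_instance n C Cs ks A \<and>
    is_committee C Cs ks W1 \<and> is_committee C Cs ks W2 \<and> is_committee C Cs ks W3 \<and>
    weak_SW_JR n Cs ks A W1 \<and> \<not> IW_JR n Cs ks A W1 \<and>
    IW_JR n Cs ks A W2 \<and> \<not> weak_SW_JR n Cs ks A W2 \<and>
    weak_SW_JR n Cs ks A W3 \<and> IW_JR n Cs ks A W3"
proof -
  have committees: "is_committee {1,2,3,4,5} example_Cs example_ks W"
    if "W \<in> {{3,4}, {2,5}, {1,4}}" for W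
    using that by (auto simp only: is_committee_example_iff) auto
  have "scv_instance 2 {1,2,3,4,5} example_Cs example_ks example_ballots \<and>
    is_committee {1,2,3,4,5} example_Cs example_ks {3,4} \<and>
    is_committee {1,2,3,4,5} example_Cs example_ks {2,5} \<and>
    is_committee {1,2,3,4,5} example_Cs example_ks {1,4} \<and>
    weak_SW_JR 2 example_Cs example_ks example_ballots {3,4} \<and>
    \<not> IW_JR 2 example_Cs example_ks example_ballots {3,4} \<and>
    IW_JR 2 example_Cs example_ks example_ballots {2,5} \<and>
    \<not> weak_SW_JR 2 example_Cs example_ks example_ballots {2,5} \<and>
    weak_SW_JR 2 example_Cs example_ks example_ballots {1,4} \<and>
    IW_JR 2 example_Cs example_ks example_ballots {1,4}"
    using scv_instance_example committees
    by (simp add: IW_JR_example_iff weak_SW_JR_example_iff)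
  then show ?thesis by blast
qed

end
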